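(* For every $i\ge 1$, the sequence $\mathcal S_{4i+2,3}$ is a valid sequence of $2i+1$ Berge $3$-moves starting from the alternating string of $n=4i+2$ pegs. Every move is legal: its source positions are occupied and its destination positions are empty at the time of the move. After the last move the configuration is sorted; more precisely: (i) the pegs occupy exactly the positions $4,5,\dots,n+3$, i.e. the string has been shifted three places to the right overall; (ii) the $\lceil n/2\rceil$ white pegs lie to the left of the $\lfloor n/2\rfloor$ black pegs.
   Context: Pegs sit in holes of a one-dimensional board whose holes are indexed by all integers; each hole holds at most one peg, and each peg is white or black. The alternating string of $n$ pegs is the configuration in which positions $1,\dots,n$ are occupied, position $i$ holding a white peg if $i$ is odd and a black peg if $i$ is even, and every other hole is empty. A Berge $3$-move $\{\,j\ i\,\}$ is allowed when positions $i,i+1,i+2$ are occupied and positions $j,j+1,j+2$ are empty. It moves the peg in position $i+t$ to position $j+t$ for $t=0,1,2$. A sequence is written as a list of integers $\{a_1\ a_2\ \dots\ a_m\}$, which denotes the moves $\{a_1\ a_2\},\{a_2\ a_3\},\dots,\{a_{m-1}\ a_m\}$ performed in this order. Concatenation of two such lists with $\cup$ means performing the first list of moves and then the second. The sequences $\mathcal S_{4i+2,3}$ are defined recursively. - $\mathcal S_{6,3}=\{7\ 2\ 6\ 1\}$, i.e. the moves $\{7\ 2\},\{2\ 6\},\{6\ 1\}$. - For $i\ge 2$, let $\mathcal S_{4i-2,3}=\{a_1\ \dots\ a_{2i}\}$ and define $\phi(x)=x+2$ if $x\le 2i$ and $\phi(x)=x+4$ if $x\ge 2i+1$. Then $\mathcal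 S_{4i+2,3}=\{\phi(a_1)\ \phi(a_2)\ \dots\ \phi(a_{2i})\}\cup\{3\ \ 2i+4\ \ 1\}$. For example, $\mathcal S_{10,3}=\{11\ 4\ 10\ 3\ 8\ 1\}$ and $\mathcal S_{14,3}=\{15\ 6\ 14\ 5\ 12\ 3\ 10\ 1\}$. *)

theory Defs
  imports Main
begin

datatype peg = White | Black

type_synonym config = "int \<Rightarrow> peg option"

definition alt :: "nat \<Rightarrow> config" where
  "alt n = (\<lambda>p. if 1 \<le> p \<and> p \<le> int n then Some (if odd p then White else Black) else None)"

definition move_legal :: "int \<Rightarrow> int \<Rightarrow> config \<Rightarrow> bool" where
  "move_legal j i c \<longleftrightarrow> (\<forall>t::int. 0 \<le> t \<and> t \<le> 2 \<longrightarrow> c (i + t) \<noteq> None \<and> c (j + t) = None)"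

definition move_apply :: "int \<Rightarrow> int \<Rightarrow> config \<Rightarrow> config" where
  "move_apply j i c = (\<lambda>p. if j \<le> p \<and> p \<le> j + 2 then c (i + (p - j))
                          else if i \<le> p \<and> p \<le> i + 2 then None else c p)"

fun run :: "(int \<times> int) list \<Rightarrow> config \<Rightarrow> config option" where
  "run [] c = Some c"
| "run ((j, i) # ms) c = (if move_legal j i c then run ms (move_apply j i c) else None)"

text \<open>The list {a1 ... am} denotes moves {a1 a2}, ..., {a(m-1) am}.\<close>
definition moves_of :: "int list \<Rightarrow> (int \<times> int) list" where
  "moves_of xs = zip xs (tl xs)"

text \<open>The moves of the phi-image
  {phi(a1) ... phi(a_{2i})} are the phi-images of the moves {a_k a_(k+1)} of S_{4i-2,3};
  they are followed (union) by the moves of {3, 2i+4, 1}.\<close>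
fun movesS :: "nat \<Rightarrow> (int \<times> int) list" where
  "movesS 0 = []"
| "movesS (Suc 0) = moves_of [7, 2, 6, 1]"
| "movesS (Suc (Suc k)) =
     (let i = int k + 2; \<phi> = (\<lambda>x::int. if x \<le> 2 * i then x + 2 else x + 4) in
      map (\<lambda>(a, b). (\<phi> a, \<phi> b)) (movesS (Suc k)) @ moves_of [3, 2 * i + 4, 1])"

end

theory Submission
  imports Defs
begin

text \<open>
  Unfolding the recursion gives the closed form
  \<open>{4i+3, 2i, 4i+2, 2i-1, 4i, 2i-3, \<dots>, 2i+4, 1}\<close> (\<open>berge_moves\<close>).
  The first two moves park the block at \<open>2i\<close> beyond the right end and fill the hole
  with the block at \<open>4i+2\<close>.  After \<open>2k+2\<close> moves the configuration is
  \<open>mid_config i k\<close>: an alternating prefix on \<open>1..2(i-k)\<close>, a black peg, whites up to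
  \<open>2i+3\<close>, an alternating segment, the hole at \<open>4i+2-2k\<close>, and blacks up to \<open>4i+5\<close>;
  each further pair of moves shifts the hole two places left, moving two more whites into the
  white block and two more blacks into the black block.  The last move carries W B B from
  \<open>1..3\<close> into the hole at \<open>2i+4\<close>.
\<close>

lemma run_append: "run (xs @ ys) c = (case run xs c of None \<Rightarrow> None | Some c' \<Rightarrow> run ys c')"
  by (induction xs c rule: run.induct) auto

lemma run_concat_map_upt:
  assumes "\<And>k. k < m \<Longrightarrow> run (f k) (s k) = Some (s (Suc k))"
  shows "run (concat (map f [0..<m])) (s 0) = Some (s m)"
  using assms by (induction m) (simp_all add: run_append)

lemma move_legal_iff:
  "move_legal j i c \<longleftrightarrow>
     c i \<noteq> None \<and> c (i + 1) \<noteq> None \<and> c (i + 2) \<noteq> None \<and>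
     c j = None \<and> c (j + 1) = None \<and> c (j + 2) = None"
proof -
  have "(\<forall>t::int. 0 \<le> t \<and> t \<le> 2 \<longrightarrow> P t) \<longleftrightarrow> P 0 \<and> P 1 \<and> P 2" for P
  proof -
    have "0 \<le> t \<and> t \<le> 2 \<longleftrightarrow> t = 0 \<or> t = 1 \<or> t = 2" for t :: int
      by arith
    then show ?thesis by auto
  qed
  then show ?thesis
    unfolding move_legal_def by auto
qed

definition berge_pair :: "nat \<Rightarrow> nat \<Rightarrow> (int \<times> int) list" where
  "berge_pair i k =
     [(4 * int i + 2 - 2 * int k, 2 * int i - 1 - 2 * int k),
      (2 * int i - 1 - 2 * int k, 4 * int i - 2 * int k)]"

definition berge_moves :: "nat \<Rightarrow> (int \<times> int) list" where
  "berge_moves i =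
     [(4 * int i + 3, 2 * int i), (2 * int i, 4 * int i + 2)] @
     concat (map (berge_pair i) [0..<i - 1]) @ [(2 * int i + 4, 1)]"

lemma length_berge_moves: "i \<ge> 1 \<Longrightarrow> length (berge_moves i) = 2 * i + 1"
  by (simp add: berge_moves_def berge_pair_def length_concat comp_def sum_list_triv)

lemma map_shift_berge_pair:
  assumes "Suc k < i" and "\<phi> = (\<lambda>x. if x \<le> 2 * (int i + 1) then x + 2 else x + 4)"
  shows "map (\<lambda>(a, b). (\<phi> a, \<phi> b)) (berge_pair i k) = berge_pair (Suc i) k"
  using assms by (auto simp: berge_pair_def)

lemma movesS_eq_berge_moves: "i \<ge> 1 \<Longrightarrow> movesS i = berge_moves i"
proof (induction i rule: movesS.induct)
  case 1
  then show ?case by simp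
next
  case 2
  then show ?case by (simp add: berge_moves_def moves_of_def)
next
  case (3 k)
  define \<phi> where "\<phi> = (\<lambda>x::int. if x \<le> 2 * (int (Suc k) + 1) then x + 2 else x + 4)"
  have pairs: "map (\<lambda>(a, b). (\<phi> a, \<phi> b)) (concat (map (berge_pair (Suc k)) [0..<k]))
      = concat (map (berge_pair (Suc (Suc k))) [0..<k])"
    unfolding map_concat map_map
    by (intro arg_cong[where f = concat] map_cong) (auto simp: map_shift_berge_pair \<phi>_def)
  have "movesS (Suc (Suc k)) = map (\<lambda>(a, b). (\<phi> a, \<phi> b)) (berge_moves (Suc k))
      @ moves_of [3, 2 * (int k + 2) + 4, 1]"
    using 3 by (simp add: \<phi>_def add.commute)
  also have "\<dots> = berge_moves (Suc (Suc k))"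
    using pairs by (simp add: berge_moves_def berge_pair_def moves_of_def \<phi>_def)
  finally show ?case .
qed

definition mid_config :: "nat \<Rightarrow> nat \<Rightarrow> config" where
  "mid_config i k = (\<lambda>p. let I = int i; K = int k in
     if (1 \<le> p \<and> p \<le> 2 * (I - K)) \<or> (2 * I + 4 \<le> p \<and> p \<le> 4 * I + 1 - 2 * K)
       then Some (if odd p then White else Black)
     else if p = 2 * (I - K) + 1 then Some Black
     else if 2 * (I - K) + 2 \<le> p \<and> p \<le> 2 * I + 3 then Some White
     else if 4 * I + 5 - 2 * K \<le> p \<and> p \<le> 4 * I + 5 then Some Black
     else None)"

definition sorted_config :: "nat \<Rightarrow> config" where
  "sorted_config i = (\<lambda>p.
     if 4 \<le> p \<and> p \<le> 2 * int i + 4 then Some White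
     else if 2 * int i + 5 \<le> p \<and> p \<le> 4 * int i + 5 then Some Black
     else None)"

lemma run_first_moves:
  assumes "i \<ge> 1"
  shows "run [(4 * int i + 3, 2 * int i), (2 * int i, 4 * int i + 2)] (alt (4 * i + 2))
           = Some (mid_config i 0)"
proof -
  let ?c = "move_apply (4 * int i + 3) (2 * int i) (alt (4 * i + 2))"
  have "move_legal (4 * int i + 3) (2 * int i) (alt (4 * i + 2))"
    using assms by (simp add: move_legal_iff alt_def)
  moreover have "move_legal (2 * int i) (4 * int i + 2) ?c"
    using assms by (simp add: move_legal_iff alt_def move_apply_def)
  moreover have "move_apply (2 * int i) (4 * int i + 2) ?c = mid_config i 0"
    using assms
    by (intro ext) (auto simp: alt_def move_apply_def mid_config_def Let_def; presburger)
  ultimately show ?thesis by simp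
qed

lemma run_berge_pair:
  assumes "Suc k < i"
  shows "run (berge_pair i k) (mid_config i k) = Some (mid_config i (Suc k))"
proof -
  let ?c = "move_apply (4 * int i + 2 - 2 * int k) (2 * int i - 1 - 2 * int k) (mid_config i k)"
  have "move_legal (4 * int i + 2 - 2 * int k) (2 * int i - 1 - 2 * int k) (mid_config i k)"
    using assms by (simp add: move_legal_iff mid_config_def Let_def)
  moreover have "move_legal (2 * int i - 1 - 2 * int k) (4 * int i - 2 * int k) ?c"
    using assms by (simp add: move_legal_iff mid_config_def Let_def move_apply_def)
  moreover have
    "move_apply (2 * int i - 1 - 2 * int k) (4 * int i - 2 * int k) ?c = mid_config i (Suc k)"
    using assms by (intro ext) (auto simp: move_apply_def mid_config_def Let_def; presburger)
  ultimately show ?thesis by (simp add: berge_pair_def)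
qed

lemma run_last_move:
  assumes "i \<ge> 1"
  shows "run [(2 * int i + 4, 1)] (mid_config i (i - 1)) = Some (sorted_config i)"
proof -
  have k: "int (i - 1) = int i - 1"
    using assms by simp
  have "move_legal (2 * int i + 4) 1 (mid_config i (i - 1))"
    using assms by (simp add: move_legal_iff mid_config_def Let_def k)
  moreover have "move_apply (2 * int i + 4) 1 (mid_config i (i - 1)) = sorted_config i"
    using assms
    by (intro ext) (auto simp: move_apply_def mid_config_def Let_def sorted_config_def k; presburger)
  ultimately show ?thesis by simp
qed

lemma run_berge_moves:
  assumes "i \<ge> 1"
  shows "run (berge_moves i) (alt (4 * i + 2)) = Some (sorted_config i)"
proof -
  have "run (concat (map (berge_pair i) [0..<i - 1])) (mid_config i 0) = Some (mid_config i (i - 1))"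
    by (rule run_concat_map_upt) (simp add: run_berge_pair)
  then show ?thesis
    using run_first_moves[OF assms] run_last_move[OF assms]
    unfolding berge_moves_def run_append by (simp del: run.simps)
qed

theorem lemma3:
  fixes i :: nat
  assumes "i \<ge> 1"
  defines "n \<equiv> 4 * i + 2"
  shows "length (movesS i) = 2 * i + 1 \<and>
         (\<exists>c. run (movesS i) (alt n) = Some c \<and>
              {p. c p \<noteq> None} = {4 .. int n + 3} \<and>
              card {p. c p = Some White} = (n + 1) div 2 \<and>
              card {p. c p = Some Black} = n div 2 \<and>
              (\<forall>p q. c p = Some White \<and> c q = Some Black \<longrightarrow> p < q))"
proof -
  let ?c = "sorted_config i"
  have white: "{p. ?c p = Some White} = {4 .. 2 * int i + 4}"
    by (auto simp: sorted_config_def)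
  have black: "{p. ?c p = Some Black} = {2 * int i + 5 .. 4 * int i + 5}"
    by (auto simp: sorted_config_def)
  have "run (movesS i) (alt n) = Some ?c"
    unfolding n_def movesS_eq_berge_moves[OF assms(1)] using assms(1) by (rule run_berge_moves)
  moreover have "{p. ?c p \<noteq> None} = {4 .. int n + 3}"
    by (auto simp: sorted_config_def n_def)
  moreover have "card {p. ?c p = Some White} = (n + 1) div 2"
    and "card {p. ?c p = Some Black} = n div 2"
    unfolding white black n_def by simp_all
  moreover have "\<forall>p q. ?c p = Some White \<and> ?c q = Some Black \<longrightarrow> p < q"
    by (auto simp: sorted_config_def split: if_splits)
  ultimately show ?thesis
    using assms(1) by (auto simp: movesS_eq_berge_moves length_berge_moves)
qed

end
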